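(* Let $R$ be a ring, $S\in\mathrm{maxDen}_l(R)$, $A=S^{-1}R$ with group of units $A^*$, $\mathfrak a:=\mathrm{ass}(S)$, $\pi_{\mathfrak a}:R\to R/\mathfrak a$, $a\mapsto a+\mathfrak a$, and $\sigma_{\mathfrak a}:R\to A$, $r\mapsto r/1$ (so $R/\mathfrak a$ is identified with $\sigma_{\mathfrak a}(R)\subseteq A$). Then: (1) $S=S_{\mathfrak a}(R)$, $S=\pi_{\mathfrak a}^{-1}(S_0(R/\mathfrak a))$, $\pi_{\mathfrak a}(S)=S_0(R/\mathfrak a)$ and $A\cong S_0(R/\mathfrak a)^{-1}(R/\mathfrak a)=Q_l(R/\mathfrak a)$; (2) $S_0(A)=A^*$ and $S_0(A)\cap (R/\mathfrak a)=S_0(R/\mathfrak a)$; (3) $S=\sigma_{\mathfrak a}^{-1}(A^* )$; (4) $A^*$ is the group generated by $\sigma_{\mathfrak a}(S)$ and $\{\sigma_{\mathfrak a}(s)^{-1}\mid s\in S\}$; (5) $A^*=\{\sigma_{\mathfrak a}(s)^{-1}\sigma_{\mathfrak a}(t)\mid s,t\in S\}$; (6) $Q_l(A)=A$ and $\mathrm{Ass}_l(A)=\{0\}$; in particular, every $T\in\mathrm{Den}_l(A,0)$ satisfies $T\subseteq A^*$.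
   Context: Rings are associative with $1$. A multiplicatively closed subset $S$ ($1\in S$, $0\notin S$) is a left Ore set if $Sr\cap Rs\ne\emptyset$ for all $r\in R,s\in S$; $\mathrm{ass}(S):=\{r\mid sr=0\text{ for some }s\in S\}$; it is a left denominator set if moreover $rs=0$ ($s\in S$) implies $tr=0$ for some $t\in S$. $\mathrm{Den}_l(R)$ is the set of left denominator sets, $\mathrm{maxDen}_l(R)$ the set of its maximal elements under inclusion, $\mathrm{Ass}_l(R)=\{\mathrm{ass}(S)\mid S\in\mathrm{Den}_l(R)\}$, $\mathrm{Den}_l(R,\mathfrak b)=\{S\in\mathrm{Den}_l(R)\mid\mathrm{ass}(S)=\mathfrak b\}$, and $S_{\mathfrak b}(R)$ is the largest element of $\mathrm{Den}_l(R,\mathfrak b)$ (it exists). For a ring $B$, $S_0(B):=S_{0}(B)$ is the largest element of $\mathrm{Den}_l(B,0)$ and $Q_l(B):=S_0(B)^{-1}B$. *)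

theory Defs
  imports "HOL-Algebra.Algebra"
begin

definition mult_closed :: "('a,'m) ring_scheme \<Rightarrow> 'a set \<Rightarrow> bool" where
  "mult_closed R S \<longleftrightarrow> S \<subseteq> carrier R \<and> \<one>\<^bsub>R\<^esub> \<in> S \<and> \<zero>\<^bsub>R\<^esub> \<notin> S \<and>
     (\<forall>s\<in>S. \<forall>t\<in>S. s \<otimes>\<^bsub>R\<^esub> t \<in> S)"

definition left_Ore :: "('a,'m) ring_scheme \<Rightarrow> 'a set \<Rightarrow> bool" where
  "left_Ore R S \<longleftrightarrow> mult_closed R S \<and>
     (\<forall>r\<in>carrier R. \<forall>s\<in>S. \<exists>s'\<in>S. \<exists>r'\<in>carrier R. s' \<otimes>\<^bsub>R\<^esub> r = r' \<otimes>\<^bsub>R\<^esub> s)"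

definition ass :: "('a,'m) ring_scheme \<Rightarrow> 'a set \<Rightarrow> 'a set" where
  "ass R S = {r \<in> carrier R. \<exists>s\<in>S. s \<otimes>\<^bsub>R\<^esub> r = \<zero>\<^bsub>R\<^esub>}"

definition left_den :: "('a,'m) ring_scheme \<Rightarrow> 'a set \<Rightarrow> bool" where
  "left_den R S \<longleftrightarrow> left_Ore R S \<and>
     (\<forall>r\<in>carrier R. \<forall>s\<in>S. r \<otimes>\<^bsub>R\<^esub> s = \<zero>\<^bsub>R\<^esub> \<longrightarrow> (\<exists>t\<in>S. t \<otimes>\<^bsub>R\<^esub> r = \<zero>\<^bsub>R\<^esub>))"

definition Den_l :: "('a,'m) ring_scheme \<Rightarrow> 'a set set" where
  "Den_l R = {S. left_den R S}"

definition maxDen_l :: "('a,'m) ring_scheme \<Rightarrow> 'a set set" where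
  "maxDen_l R = {S \<in> Den_l R. \<forall>T\<in>Den_l R. S \<subseteq> T \<longrightarrow> T = S}"

definition Ass_l :: "('a,'m) ring_scheme \<Rightarrow> 'a set set" where
  "Ass_l R = ass R ` Den_l R"

definition Den_l_ass :: "('a,'m) ring_scheme \<Rightarrow> 'a set \<Rightarrow> 'a set set" where
  "Den_l_ass R b = {S \<in> Den_l R. ass R S = b}"

text \<open>The largest element of Den_l(R,b) (exists whenever b is in Ass_l R).\<close>
definition S_ass :: "('a,'m) ring_scheme \<Rightarrow> 'a set \<Rightarrow> 'a set" where
  "S_ass R b = (THE S. S \<in> Den_l_ass R b \<and> (\<forall>T\<in>Den_l_ass R b. T \<subseteq> S))"

definition S0 :: "('a,'m) ring_scheme \<Rightarrow> 'a set" where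
  "S0 R = S_ass R {\<zero>\<^bsub>R\<^esub>}"

text \<open>The left ring of fractions: sigma : R -> A is a left localization of R at S
  (A = S^{-1}R with sigma(r) = r/1) iff sigma is a ring homomorphism, sigma(S) consists
  of units, every element of A is a left fraction sigma(s)^{-1} sigma(r), and
  ker sigma = ass(S).\<close>
definition is_left_loc ::
  "('a,'m) ring_scheme \<Rightarrow> 'a set \<Rightarrow> ('b,'n) ring_scheme \<Rightarrow> ('a \<Rightarrow> 'b) \<Rightarrow> bool" where
  "is_left_loc R S A \<sigma> \<longleftrightarrow> ring A \<and> \<sigma> \<in> ring_hom R A \<and>
     (\<forall>s\<in>S. \<sigma> s \<in> Units A) \<and>
     (\<forall>a\<in>carrier A. \<exists>s\<in>S. \<exists>r\<in>carrier R. a = inv\<^bsub>A\<^esub> (\<sigma> s) \<otimes>\<^bsub>A\<^esub> \<sigma> r) \<and>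
     (\<forall>r\<in>carrier R. \<sigma> r = \<zero>\<^bsub>A\<^esub> \<longleftrightarrow> r \<in> ass R S)"

end

theory Submission
  imports Defs
begin

text \<open>
  Maximality of \<open>S\<close> enters through one principle: if \<open>W\<close> is a left denominator set of
  \<open>A = S\<^sup>-\<^sup>1R\<close> containing \<open>A\<^sup>*\<close>, then \<open>\<sigma>\<^sup>-\<^sup>1(W)\<close> is a left denominator set of \<open>R\<close>
  containing \<open>S\<close>, so it equals \<open>S\<close>; clearing denominators then gives \<open>W = A\<^sup>*\<close>.
  Each extremality claim is reduced to this by taking for \<open>W\<close> the monoid generated by \<open>A\<^sup>*\<close>
  and a candidate set (a left denominator set of \<open>A\<close>, or the image under \<open>\<sigma>\<close> of one of \<open>R\<close>
  or of \<open>R/\<aa>\<close>), which inherits the Ore and reversibility conditions. Since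
  \<open>ker \<sigma> = \<aa>\<close>, the map \<open>\<sigma>\<close> factors through an injection \<open>R/\<aa> \<rightarrow> A\<close>, which makes the image
  of \<open>S\<close> regular in \<open>R/\<aa>\<close> and exhibits \<open>A\<close> as its ring of left fractions.
\<close>

lemma Den_l_iff:
  "T \<in> Den_l R \<longleftrightarrow> T \<subseteq> carrier R \<and> \<one>\<^bsub>R\<^esub> \<in> T \<and> \<zero>\<^bsub>R\<^esub> \<notin> T \<and>
     (\<forall>s\<in>T. \<forall>t\<in>T. s \<otimes>\<^bsub>R\<^esub> t \<in> T) \<and>
     (\<forall>r\<in>carrier R. \<forall>s\<in>T. \<exists>s'\<in>T. \<exists>r'\<in>carrier R. s' \<otimes>\<^bsub>R\<^esub> r = r' \<otimes>\<^bsub>R\<^esub> s) \<and>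
     (\<forall>r\<in>carrier R. \<forall>s\<in>T. r \<otimes>\<^bsub>R\<^esub> s = \<zero>\<^bsub>R\<^esub> \<longrightarrow> (\<exists>t\<in>T. t \<otimes>\<^bsub>R\<^esub> r = \<zero>\<^bsub>R\<^esub>))"
  by (auto simp: Den_l_def left_den_def left_Ore_def mult_closed_def)

lemma S_ass_eqI:
  assumes "S \<in> Den_l_ass R \<bb>" and "\<And>T. T \<in> Den_l_ass R \<bb> \<Longrightarrow> T \<subseteq> S"
  shows "S_ass R \<bb> = S"
  unfolding S_ass_def by (rule the_equality) (use assms in blast)+

inductive_set units_submonoid :: "('a,'m) ring_scheme \<Rightarrow> 'a set \<Rightarrow> 'a set" for R G where
  one: "\<one>\<^bsub>R\<^esub> \<in> units_submonoid R G"
| unit: "u \<in> Units R \<Longrightarrow> w \<in> units_submonoid R G \<Longrightarrow> u \<otimes>\<^bsub>R\<^esub> w \<in> units_submonoid R G"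
| gen: "g \<in> G \<Longrightarrow> w \<in> units_submonoid R G \<Longrightarrow> g \<otimes>\<^bsub>R\<^esub> w \<in> units_submonoid R G"

lemma (in monoid) Units_of_Units_mult:
  assumes "u \<in> Units G" "w \<in> carrier G" "u \<otimes> w \<in> Units G"
  shows "w \<in> Units G"
proof -
  have "w = inv u \<otimes> (u \<otimes> w)" using assms by (simp add: m_assoc[symmetric] Units_closed)
  then show ?thesis using assms by (metis Units_inv_Units Units_m_closed)
qed

context ring
begin

lemma Units_mult_eq_zero_iff:
  assumes "u \<in> Units R" and "a \<in> carrier R"
  shows "u \<otimes> a = \<zero> \<longleftrightarrow> a = \<zero>"
  using Units_l_cancel[OF assms zero_closed] assms by (simp add: Units_closed)

lemma mult_Units_eq_zero_iff:
  assumes "u \<in> Units R" and "a \<in> carrier R"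
  shows "a \<otimes> u = \<zero> \<longleftrightarrow> a = \<zero>"
proof
  assume "a \<otimes> u = \<zero>"
  have "a = (a \<otimes> u) \<otimes> inv u" using assms by (simp add: m_assoc Units_closed)
  also have "\<dots> = \<zero>" using \<open>a \<otimes> u = \<zero>\<close> assms by simp
  finally show "a = \<zero>" .
qed (use assms in \<open>simp add: Units_closed\<close>)

lemma zero_notin_Units:
  assumes "\<one> \<noteq> \<zero>"
  shows "\<zero> \<notin> Units R"
  using assms Units_mult_eq_zero_iff[of \<zero> \<one>] by auto

lemma Units_Den_l:
  assumes "\<one> \<noteq> \<zero>"
  shows "Units R \<in> Den_l R"
  unfolding Den_l_iff
proof (intro conjI ballI impI)
  show "\<zero> \<notin> Units R" using zero_notin_Units[OF assms] .
next
  fix r s assume r: "r \<in> carrier R" and s: "s \<in> Units R"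
  have "\<one> \<otimes> r = (r \<otimes> inv s) \<otimes> s"
    using r s by (simp add: m_assoc Units_closed)
  then show "\<exists>s'\<in>Units R. \<exists>r'\<in>carrier R. s' \<otimes> r = r' \<otimes> s"
    using r s by blast
next
  fix r s assume "r \<in> carrier R" "s \<in> Units R" "r \<otimes> s = \<zero>"
  then show "\<exists>t\<in>Units R. t \<otimes> r = \<zero>"
    using mult_Units_eq_zero_iff by (intro bexI[of _ \<one>]) auto
qed auto

lemma ass_eq_zero_if_subset_Units:
  assumes "T \<subseteq> Units R" and "\<one> \<in> T"
  shows "ass R T = {\<zero>}"
proof
  show "ass R T \<subseteq> {\<zero>}"
  proof
    fix x assume "x \<in> ass R T"
    then obtain t where "x \<in> carrier R" "t \<in> Units R" "t \<otimes> x = \<zero>"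
      using assms(1) unfolding ass_def by blast
    then show "x \<in> {\<zero>}" using Units_mult_eq_zero_iff by blast
  qed
  show "{\<zero>} \<subseteq> ass R T"
    using assms(2) unfolding ass_def by force
qed

lemma is_left_loc_Units:
  assumes "\<one> \<noteq> \<zero>"
  shows "is_left_loc R (Units R) R (\<lambda>x. x)"
  unfolding is_left_loc_def
proof (intro conjI ballI)
  show "(\<lambda>x. x) \<in> ring_hom R R" by (rule ring_hom_memI) auto
next
  fix a assume "a \<in> carrier R"
  then have "a = inv \<one> \<otimes> a" by simp
  then show "\<exists>s\<in>Units R. \<exists>r\<in>carrier R. a = inv s \<otimes> r"
    using \<open>a \<in> carrier R\<close> by blast
next
  fix r assume "r \<in> carrier R"
  then show "r = \<zero> \<longleftrightarrow> r \<in> ass R (Units R)"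
    using ass_eq_zero_if_subset_Units[of "Units R"] by simp
qed (auto simp: ring_axioms)

lemma units_submonoid_closed:
  assumes "G \<subseteq> carrier R" and "w \<in> units_submonoid R G"
  shows "w \<in> carrier R"
  using assms(2) by induction (use assms(1) in auto)

lemma units_submonoid_mult:
  assumes G: "G \<subseteq> carrier R" and "v \<in> units_submonoid R G" and w: "w \<in> units_submonoid R G"
  shows "v \<otimes> w \<in> units_submonoid R G"
  using assms(2)
proof induction
  case one
  then show ?case using units_submonoid_closed[OF G w] w by simp
next
  case (unit u v)
  have "(u \<otimes> v) \<otimes> w = u \<otimes> (v \<otimes> w)"
    using unit.hyps units_submonoid_closed[OF G] w by (simp add: m_assoc Units_closed)
  then show ?case using units_submonoid.unit[OF unit.hyps(1) unit.IH] by simp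
next
  case (gen g v)
  have "(g \<otimes> v) \<otimes> w = g \<otimes> (v \<otimes> w)"
    using gen.hyps G units_submonoid_closed[OF G] w by (simp add: m_assoc subsetD)
  then show ?case using units_submonoid.gen[OF gen.hyps(1) gen.IH] by simp
qed

lemma Units_subset_units_submonoid: "Units R \<subseteq> units_submonoid R G"
proof
  fix u assume u: "u \<in> Units R"
  then have "u \<otimes> \<one> \<in> units_submonoid R G"
    by (rule units_submonoid.unit[OF _ units_submonoid.one])
  then show "u \<in> units_submonoid R G" using u by (simp add: Units_closed)
qed

lemma subset_units_submonoid:
  assumes "G \<subseteq> carrier R"
  shows "G \<subseteq> units_submonoid R G"
proof
  fix g assume g: "g \<in> G"
  then have "g \<otimes> \<one> \<in> units_submonoid R G"
    by (rule units_submonoid.gen[OF _ units_submonoid.one])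
  then show "g \<in> units_submonoid R G" using g assms by auto
qed

lemma units_submonoid_Ore:
  assumes G: "G \<subseteq> carrier R"
    and Ore: "\<forall>g\<in>G. \<forall>a\<in>carrier R. \<exists>q\<in>units_submonoid R G. \<exists>c\<in>carrier R. q \<otimes> a = c \<otimes> g"
    and w: "w \<in> units_submonoid R G" and a: "a \<in> carrier R"
  shows "\<exists>q\<in>units_submonoid R G. \<exists>c\<in>carrier R. q \<otimes> a = c \<otimes> w"
  using w a
proof (induction arbitrary: a)
  case one
  have "\<one> \<otimes> a = a \<otimes> \<one>" using one.prems by simp
  then show ?case using units_submonoid.one one.prems by blast
next
  case (unit u w)
  then obtain q c where q: "q \<in> units_submonoid R G" "c \<in> carrier R" "q \<otimes> a = c \<otimes> w"
    by blast
  have "c \<otimes> w = c \<otimes> ((inv u \<otimes> u) \<otimes> w)"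
    using unit.hyps(1) units_submonoid_closed[OF G unit.hyps(2)] by simp
  also have "\<dots> = (c \<otimes> inv u) \<otimes> (u \<otimes> w)"
    using unit.hyps(1) q(2) units_submonoid_closed[OF G unit.hyps(2)]
    by (simp add: m_assoc Units_closed del: Units_l_inv)
  finally have "q \<otimes> a = (c \<otimes> inv u) \<otimes> (u \<otimes> w)" using q(3) by simp
  then show ?case using q(1,2) unit.hyps(1) by (meson Units_inv_closed Units_closed m_closed)
next
  case (gen g w)
  then obtain q c where q: "q \<in> units_submonoid R G" "c \<in> carrier R" "q \<otimes> a = c \<otimes> w"
    by blast
  obtain q' c' where q': "q' \<in> units_submonoid R G" "c' \<in> carrier R" "q' \<otimes> c = c' \<otimes> g"
    using Ore gen.hyps(1) q(2) by blast
  have qc: "q \<in> carrier R" "q' \<in> carrier R" "w \<in> carrier R" "g \<in> carrier R"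
    using q(1) q'(1) gen.hyps G units_submonoid_closed[OF G] by auto
  have "(q' \<otimes> q) \<otimes> a = q' \<otimes> (c \<otimes> w)"
    using qc gen.prems q(3) by (simp add: m_assoc)
  also have "\<dots> = c' \<otimes> (g \<otimes> w)"
    using qc q(2) q'(2,3) by (simp add: m_assoc[symmetric])
  finally show ?case using units_submonoid_mult[OF G q'(1) q(1)] q'(2) by blast
qed

lemma units_submonoid_reversible:
  assumes G: "G \<subseteq> carrier R"
    and K: "K \<subseteq> carrier R" "\<one> \<in> K" "\<forall>k\<in>K. \<forall>k'\<in>K. k \<otimes> k' \<in> K"
    and rev: "\<forall>g\<in>G. \<forall>y\<in>carrier R. y \<otimes> g = \<zero> \<longrightarrow> (\<exists>k\<in>K. k \<otimes> y = \<zero>)"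
    and w: "w \<in> units_submonoid R G" and x: "x \<in> carrier R" "x \<otimes> w = \<zero>"
  shows "\<exists>k\<in>K. k \<otimes> x = \<zero>"
  using w x
proof (induction arbitrary: x)
  case one
  then show ?case using K by (intro bexI[of _ \<one>]) auto
next
  case (unit u w)
  have u: "u \<in> carrier R" using unit.hyps(1) by blast
  have "(x \<otimes> u) \<otimes> w = \<zero>"
    using unit.prems u units_submonoid_closed[OF G unit.hyps(2)] by (simp add: m_assoc)
  then obtain k where k: "k \<in> K" "k \<otimes> (x \<otimes> u) = \<zero>"
    using unit.IH unit.prems u by blast
  have "k \<otimes> x = (k \<otimes> (x \<otimes> u)) \<otimes> inv u"
    using unit.hyps(1) k(1) K(1) unit.prems by (simp add: m_assoc subsetD Units_closed)
  then show ?case using k unit.hyps(1) by auto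
next
  case (gen g w)
  have g: "g \<in> carrier R" using gen.hyps(1) G by blast
  have "(x \<otimes> g) \<otimes> w = \<zero>"
    using gen.prems g units_submonoid_closed[OF G gen.hyps(2)] by (simp add: m_assoc)
  then obtain k where k: "k \<in> K" "k \<otimes> (x \<otimes> g) = \<zero>"
    using gen.IH gen.prems g by blast
  have kx: "k \<otimes> x \<in> carrier R" using k(1) K(1) gen.prems by blast
  have "(k \<otimes> x) \<otimes> g = \<zero>" using k K(1) g gen.prems by (simp add: m_assoc subsetD)
  then obtain k' where k': "k' \<in> K" "k' \<otimes> (k \<otimes> x) = \<zero>"
    using rev gen.hyps(1) kx by blast
  have "(k' \<otimes> k) \<otimes> x = \<zero>" using k' k K(1) gen.prems by (simp add: m_assoc subsetD)
  then show ?case using K(3) k'(1) k(1) by blast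
qed

text \<open>Reversibility only has to be witnessed inside some multiplicative \<open>K\<close> avoiding \<open>\<zero>\<close>;
  this is what keeps \<open>\<zero>\<close> out of the generated monoid.\<close>

lemma units_submonoid_Den_l:
  assumes G: "G \<subseteq> carrier R"
    and K: "K \<subseteq> units_submonoid R G" "\<one> \<in> K" "\<zero> \<notin> K"
      "\<forall>k\<in>K. \<forall>k'\<in>K. k \<otimes> k' \<in> K"
    and Ore: "\<forall>g\<in>G. \<forall>a\<in>carrier R. \<exists>q\<in>units_submonoid R G. \<exists>c\<in>carrier R. q \<otimes> a = c \<otimes> g"
    and rev: "\<forall>g\<in>G. \<forall>y\<in>carrier R. y \<otimes> g = \<zero> \<longrightarrow> (\<exists>k\<in>K. k \<otimes> y = \<zero>)"
  shows "units_submonoid R G \<in> Den_l R"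
proof -
  have Kc: "K \<subseteq> carrier R" using K(1) units_submonoid_closed[OF G] by blast
  have W_rev: "\<exists>k\<in>K. k \<otimes> x = \<zero>"
    if "w \<in> units_submonoid R G" "x \<in> carrier R" "x \<otimes> w = \<zero>" for w x
    by (rule units_submonoid_reversible[OF G Kc K(2,4) rev that])
  have "\<zero> \<notin> units_submonoid R G"
  proof
    assume "\<zero> \<in> units_submonoid R G"
    then obtain k where "k \<in> K" "k \<otimes> \<one> = \<zero>" using W_rev[of "\<zero>" "\<one>"] by auto
    then show False using K(3) Kc by auto
  qed
  moreover have "\<exists>q\<in>units_submonoid R G. \<exists>c\<in>carrier R. q \<otimes> a = c \<otimes> w"
    if "a \<in> carrier R" "w \<in> units_submonoid R G" for a w
    by (rule units_submonoid_Ore[OF G Ore that(2,1)])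
  moreover have "\<exists>t\<in>units_submonoid R G. t \<otimes> x = \<zero>"
    if "w \<in> units_submonoid R G" "x \<in> carrier R" "x \<otimes> w = \<zero>" for w x
    using W_rev[OF that] K(1) by blast
  ultimately show ?thesis
    unfolding Den_l_iff
    using units_submonoid_closed[OF G] units_submonoid_mult[OF G] units_submonoid.one
    by (intro conjI ballI impI subsetI) blast+
qed

end

locale left_localization = R: ring R + A: ring A
  for R :: "('a,'m) ring_scheme" and A :: "('b,'n) ring_scheme" +
  fixes S :: "'a set" and \<sigma> :: "'a \<Rightarrow> 'b"
  assumes S_Den_l: "S \<in> Den_l R" and is_left_loc: "is_left_loc R S A \<sigma>"
begin

sublocale \<sigma>: ring_hom_ring R A \<sigma>
  using is_left_loc unfolding is_left_loc_def
  by (intro ring_hom_ringI2) (auto simp: R.ring_axioms A.ring_axioms)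

lemma S_closed: "s \<in> S \<Longrightarrow> s \<in> carrier R"
  and one_in_S: "\<one>\<^bsub>R\<^esub> \<in> S"
  and zero_notin_S: "\<zero>\<^bsub>R\<^esub> \<notin> S"
  and S_mult: "s \<in> S \<Longrightarrow> t \<in> S \<Longrightarrow> s \<otimes>\<^bsub>R\<^esub> t \<in> S"
  and S_Ore: "r \<in> carrier R \<Longrightarrow> s \<in> S \<Longrightarrow> \<exists>s'\<in>S. \<exists>r'\<in>carrier R. s' \<otimes>\<^bsub>R\<^esub> r = r' \<otimes>\<^bsub>R\<^esub> s"
  using S_Den_l unfolding Den_l_iff by blast+

lemma \<sigma>_Units: "s \<in> S \<Longrightarrow> \<sigma> s \<in> Units A"
  using is_left_loc by (auto simp: is_left_loc_def)

lemma \<sigma>_eq_zero_iff: "r \<in> carrier R \<Longrightarrow> \<sigma> r = \<zero>\<^bsub>A\<^esub> \<longleftrightarrow> r \<in> ass R S"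
  using is_left_loc by (auto simp: is_left_loc_def)

lemma left_fraction:
  assumes "a \<in> carrier A"
  obtains s r where "s \<in> S" "r \<in> carrier R" "a = inv\<^bsub>A\<^esub> (\<sigma> s) \<otimes>\<^bsub>A\<^esub> \<sigma> r"
  using is_left_loc assms unfolding is_left_loc_def by blast

lemma clear_denominator:
  assumes a: "a \<in> carrier A"
  obtains p v where "p \<in> S" "v \<in> carrier R" "\<sigma> v = \<sigma> p \<otimes>\<^bsub>A\<^esub> a"
proof -
  obtain s r where sr: "s \<in> S" "r \<in> carrier R" "a = inv\<^bsub>A\<^esub> (\<sigma> s) \<otimes>\<^bsub>A\<^esub> \<sigma> r"
    using left_fraction[OF a] .
  have "\<sigma> r = \<sigma> s \<otimes>\<^bsub>A\<^esub> a"
    using sr \<sigma>_Units[OF sr(1)] by (simp add: A.m_assoc[symmetric] A.Units_closed)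
  then show thesis using that sr by blast
qed

lemma common_denominator:
  assumes "a \<in> carrier A" "b \<in> carrier A"
  obtains p u v where "p \<in> S" "u \<in> carrier R" "v \<in> carrier R"
    "\<sigma> u = \<sigma> p \<otimes>\<^bsub>A\<^esub> a" "\<sigma> v = \<sigma> p \<otimes>\<^bsub>A\<^esub> b"
proof -
  obtain p u where pu: "p \<in> S" "u \<in> carrier R" "\<sigma> u = \<sigma> p \<otimes>\<^bsub>A\<^esub> a"
    using clear_denominator[OF assms(1)] .
  have p: "p \<in> carrier R" using S_closed[OF pu(1)] .
  obtain p' v where pv: "p' \<in> S" "v \<in> carrier R" "\<sigma> v = \<sigma> p' \<otimes>\<^bsub>A\<^esub> (\<sigma> p \<otimes>\<^bsub>A\<^esub> b)"
    using clear_denominator[of "\<sigma> p \<otimes>\<^bsub>A\<^esub> b"] p assms(2) by auto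
  have p': "p' \<in> carrier R" using S_closed[OF pv(1)] .
  show thesis
  proof (rule that[of "p' \<otimes>\<^bsub>R\<^esub> p" "p' \<otimes>\<^bsub>R\<^esub> u" v])
    show "\<sigma> (p' \<otimes>\<^bsub>R\<^esub> u) = \<sigma> (p' \<otimes>\<^bsub>R\<^esub> p) \<otimes>\<^bsub>A\<^esub> a"
      using pu p p' assms by (simp add: A.m_assoc)
    show "\<sigma> v = \<sigma> (p' \<otimes>\<^bsub>R\<^esub> p) \<otimes>\<^bsub>A\<^esub> b"
      using pv p p' assms by (simp add: A.m_assoc)
  qed (use pu pv p p' S_mult in auto)
qed

lemma eq_imp_common_left_multiple:
  assumes "x \<in> carrier R" "y \<in> carrier R" "\<sigma> x = \<sigma> y"
  obtains s where "s \<in> S" "s \<otimes>\<^bsub>R\<^esub> x = s \<otimes>\<^bsub>R\<^esub> y"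
proof -
  have "\<sigma> (x \<ominus>\<^bsub>R\<^esub> y) = \<zero>\<^bsub>A\<^esub>"
    using assms by (simp add: a_minus_def A.r_neg)
  then obtain s where s: "s \<in> S" "s \<otimes>\<^bsub>R\<^esub> (x \<ominus>\<^bsub>R\<^esub> y) = \<zero>\<^bsub>R\<^esub>"
    using \<sigma>_eq_zero_iff assms by (auto simp: ass_def)
  then have "s \<otimes>\<^bsub>R\<^esub> x \<ominus>\<^bsub>R\<^esub> s \<otimes>\<^bsub>R\<^esub> y = \<zero>\<^bsub>R\<^esub>"
    using assms S_closed by (simp add: a_minus_def R.r_distr R.r_minus)
  then show thesis using that s assms S_closed by auto
qed

lemma one_ne_zero_A: "\<one>\<^bsub>A\<^esub> \<noteq> \<zero>\<^bsub>A\<^esub>"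
proof
  assume "\<one>\<^bsub>A\<^esub> = \<zero>\<^bsub>A\<^esub>"
  then have "\<one>\<^bsub>R\<^esub> \<in> ass R S" using \<sigma>_eq_zero_iff[OF R.one_closed] by simp
  then show False using zero_notin_S S_closed by (auto simp: ass_def)
qed

context
  fixes W :: "'b set"
  assumes W: "W \<in> Den_l A" and Units_W: "Units A \<subseteq> W"
begin

lemma preimage_lift:
  assumes "p \<in> S" "s \<in> S" "v \<in> carrier R" "w \<in> W" "\<sigma> v = \<sigma> p \<otimes>\<^bsub>A\<^esub> w"
  shows "\<sigma> (s \<otimes>\<^bsub>R\<^esub> v) \<in> W"
proof -
  have "s \<in> carrier R" "p \<in> carrier R" "w \<in> carrier A"
    using assms W S_closed unfolding Den_l_iff by auto
  then have "\<sigma> (s \<otimes>\<^bsub>R\<^esub> v) = \<sigma> (s \<otimes>\<^bsub>R\<^esub> p) \<otimes>\<^bsub>A\<^esub> w"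
    using assms by (simp add: A.m_assoc)
  moreover have "\<sigma> (s \<otimes>\<^bsub>R\<^esub> p) \<in> W" using assms S_mult \<sigma>_Units Units_W by blast
  ultimately show ?thesis using assms(4) W unfolding Den_l_iff by simp
qed

lemma preimage_Ore:
  assumes r: "r \<in> carrier R" and t: "t \<in> carrier R" "\<sigma> t \<in> W"
  shows "\<exists>s'\<in>carrier R. \<sigma> s' \<in> W \<and> (\<exists>r'\<in>carrier R. s' \<otimes>\<^bsub>R\<^esub> r = r' \<otimes>\<^bsub>R\<^esub> t)"
proof -
  obtain q c where qc: "q \<in> W" "c \<in> carrier A" "q \<otimes>\<^bsub>A\<^esub> \<sigma> r = c \<otimes>\<^bsub>A\<^esub> \<sigma> t"
    using W \<sigma>.hom_closed[OF r] t(2) unfolding Den_l_iff by blast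
  have q: "q \<in> carrier A" using qc(1) W unfolding Den_l_iff by blast
  obtain p u v where puv: "p \<in> S" "u \<in> carrier R" "v \<in> carrier R"
    "\<sigma> u = \<sigma> p \<otimes>\<^bsub>A\<^esub> q" "\<sigma> v = \<sigma> p \<otimes>\<^bsub>A\<^esub> c"
    using common_denominator[OF q qc(2)] .
  have p: "p \<in> carrier R" using S_closed[OF puv(1)] .
  have "\<sigma> (u \<otimes>\<^bsub>R\<^esub> r) = \<sigma> p \<otimes>\<^bsub>A\<^esub> (q \<otimes>\<^bsub>A\<^esub> \<sigma> r)"
    using puv p q r by (simp add: A.m_assoc)
  also have "\<dots> = \<sigma> (v \<otimes>\<^bsub>R\<^esub> t)"
    using puv p qc t by (simp add: A.m_assoc)
  finally obtain s where s: "s \<in> S" "s \<otimes>\<^bsub>R\<^esub> (u \<otimes>\<^bsub>R\<^esub> r) = s \<otimes>\<^bsub>R\<^esub> (v \<otimes>\<^bsub>R\<^esub> t)"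
    by (rule eq_imp_common_left_multiple[OF R.m_closed[OF puv(2) r] R.m_closed[OF puv(3) t(1)]])
  then have "(s \<otimes>\<^bsub>R\<^esub> u) \<otimes>\<^bsub>R\<^esub> r = (s \<otimes>\<^bsub>R\<^esub> v) \<otimes>\<^bsub>R\<^esub> t"
    using puv r t S_closed by (simp add: R.m_assoc)
  moreover have "s \<otimes>\<^bsub>R\<^esub> u \<in> carrier R" "s \<otimes>\<^bsub>R\<^esub> v \<in> carrier R"
    using s(1) puv(2,3) S_closed by auto
  ultimately show ?thesis using preimage_lift[OF puv(1) s(1) puv(2) qc(1) puv(4)] by blast
qed

lemma preimage_reversible:
  assumes r: "r \<in> carrier R" and t: "t \<in> carrier R" "\<sigma> t \<in> W" and rt: "r \<otimes>\<^bsub>R\<^esub> t = \<zero>\<^bsub>R\<^esub>"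
  shows "\<exists>s'\<in>carrier R. \<sigma> s' \<in> W \<and> s' \<otimes>\<^bsub>R\<^esub> r = \<zero>\<^bsub>R\<^esub>"
proof -
  have "\<sigma> r \<otimes>\<^bsub>A\<^esub> \<sigma> t = \<zero>\<^bsub>A\<^esub>" using rt r t by (metis \<sigma>.hom_mult \<sigma>.hom_zero)
  then obtain k where k: "k \<in> W" "k \<otimes>\<^bsub>A\<^esub> \<sigma> r = \<zero>\<^bsub>A\<^esub>"
    using W \<sigma>.hom_closed[OF r] t(2) unfolding Den_l_iff by blast
  have kc: "k \<in> carrier A" using k(1) W unfolding Den_l_iff by blast
  obtain p u where pu: "p \<in> S" "u \<in> carrier R" "\<sigma> u = \<sigma> p \<otimes>\<^bsub>A\<^esub> k"
    using clear_denominator[OF kc] .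
  have p: "p \<in> carrier R" using S_closed[OF pu(1)] .
  have "\<sigma> (u \<otimes>\<^bsub>R\<^esub> r) = \<sigma> p \<otimes>\<^bsub>A\<^esub> (k \<otimes>\<^bsub>A\<^esub> \<sigma> r)"
    using pu p kc r by (simp add: A.m_assoc)
  then have "u \<otimes>\<^bsub>R\<^esub> r \<in> ass R S" using \<sigma>_eq_zero_iff[of "u \<otimes>\<^bsub>R\<^esub> r"] k(2) pu(2) p r by simp
  then obtain s where s: "s \<in> S" "s \<otimes>\<^bsub>R\<^esub> (u \<otimes>\<^bsub>R\<^esub> r) = \<zero>\<^bsub>R\<^esub>" by (auto simp: ass_def)
  then have "(s \<otimes>\<^bsub>R\<^esub> u) \<otimes>\<^bsub>R\<^esub> r = \<zero>\<^bsub>R\<^esub>" using pu r S_closed by (simp add: R.m_assoc)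
  moreover have "s \<otimes>\<^bsub>R\<^esub> u \<in> carrier R" using s(1) pu(2) S_closed by blast
  ultimately show ?thesis using preimage_lift[OF pu(1) s(1) pu(2) k(1) pu(3)] by blast
qed

lemma preimage_Den_l: "{r \<in> carrier R. \<sigma> r \<in> W} \<in> Den_l R"
proof -
  have "\<one>\<^bsub>A\<^esub> \<in> W" "\<zero>\<^bsub>A\<^esub> \<notin> W" "\<forall>v\<in>W. \<forall>w\<in>W. v \<otimes>\<^bsub>A\<^esub> w \<in> W"
    using W unfolding Den_l_iff by auto
  moreover have "\<exists>s'\<in>{r \<in> carrier R. \<sigma> r \<in> W}. \<exists>r'\<in>carrier R. s' \<otimes>\<^bsub>R\<^esub> r = r' \<otimes>\<^bsub>R\<^esub> t"
    if "r \<in> carrier R" "t \<in> {r \<in> carrier R. \<sigma> r \<in> W}" for r t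
    using preimage_Ore[of r t] that by blast
  moreover have "\<exists>s'\<in>{r \<in> carrier R. \<sigma> r \<in> W}. s' \<otimes>\<^bsub>R\<^esub> r = \<zero>\<^bsub>R\<^esub>"
    if "r \<in> carrier R" "t \<in> {r \<in> carrier R. \<sigma> r \<in> W}" "r \<otimes>\<^bsub>R\<^esub> t = \<zero>\<^bsub>R\<^esub>" for r t
    using preimage_reversible[of r t] that by blast
  ultimately show ?thesis unfolding Den_l_iff by auto
qed

end

abbreviation "\<aa> \<equiv> ass R S"
abbreviation "Q \<equiv> R Quot \<aa>"
abbreviation "\<pi> \<equiv> \<lambda>r. \<aa> +>\<^bsub>R\<^esub> r"
abbreviation "\<tau> \<equiv> \<lambda>c. the_elem (\<sigma> ` c)"

lemma a_kernel_eq_ass: "a_kernel R A \<sigma> = \<aa>"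
proof -
  have "\<aa> \<subseteq> carrier R" by (auto simp: ass_def)
  then show ?thesis unfolding a_kernel_def' using \<sigma>_eq_zero_iff by blast
qed

sublocale I: ideal \<aa> R
  using \<sigma>.kernel_is_ideal by (simp add: a_kernel_eq_ass)

sublocale Q: ring Q
  by (rule I.quotient_is_ring)

sublocale \<pi>: ring_hom_ring R Q \<pi>
  by (rule I.rcos_ring_hom_ring)

sublocale \<tau>: ring_hom_ring Q A \<tau>
  using \<sigma>.the_elem_hom unfolding a_kernel_eq_ass
  by (intro ring_hom_ringI2) (auto simp: Q.ring_axioms A.ring_axioms)

lemma \<pi>_surj: "c \<in> carrier Q \<Longrightarrow> \<exists>r\<in>carrier R. c = \<pi> r"
  using \<sigma>.quot_mem unfolding a_kernel_eq_ass by blast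

lemma \<tau>_\<pi>: "r \<in> carrier R \<Longrightarrow> \<tau> (\<pi> r) = \<sigma> r"
  using \<sigma>.the_elem_simp unfolding a_kernel_eq_ass by blast

lemma \<pi>_eq_zero_iff:
  assumes "r \<in> carrier R"
  shows "\<pi> r = \<zero>\<^bsub>Q\<^esub> \<longleftrightarrow> r \<in> \<aa>"
proof -
  have "\<zero>\<^bsub>Q\<^esub> = \<aa>" unfolding FactRing_def by (simp only: ring.select_convs)
  then show ?thesis
    using I.rcos_const_imp_mem[OF assms] R.a_rcos_zero[OF I.ideal_axioms, of r]
    by (intro iffI) simp_all
qed

lemma \<tau>_eq_zero_iff:
  assumes "c \<in> carrier Q"
  shows "\<tau> c = \<zero>\<^bsub>A\<^esub> \<longleftrightarrow> c = \<zero>\<^bsub>Q\<^esub>"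
proof -
  obtain r where "r \<in> carrier R" "c = \<pi> r" using \<pi>_surj[OF assms] by blast
  then show ?thesis using \<tau>_\<pi> \<sigma>_eq_zero_iff \<pi>_eq_zero_iff by simp
qed

lemma \<pi>_eq_imp_\<sigma>_eq:
  assumes "x \<in> carrier R" "y \<in> carrier R" "\<pi> x = \<pi> y"
  shows "\<sigma> x = \<sigma> y"
  using \<tau>_\<pi>[OF assms(1)] \<tau>_\<pi>[OF assms(2)] assms(3) by simp

text \<open>Since \<open>\<tau>\<close> is injective and sends \<open>\<pi> ` S\<close> to units, the elements of
  \<open>\<pi> ` S\<close> are regular in \<open>Q\<close>.\<close>

lemma \<pi>_S_regular:
  assumes "s \<in> S" and c: "c \<in> carrier Q"
  shows "c \<otimes>\<^bsub>Q\<^esub> \<pi> s = \<zero>\<^bsub>Q\<^esub> \<longleftrightarrow> c = \<zero>\<^bsub>Q\<^esub>"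
    and "\<pi> s \<otimes>\<^bsub>Q\<^esub> c = \<zero>\<^bsub>Q\<^esub> \<longleftrightarrow> c = \<zero>\<^bsub>Q\<^esub>"
proof -
  have s: "s \<in> carrier R" "\<tau> (\<pi> s) \<in> Units A"
    using S_closed[OF assms(1)] \<tau>_\<pi> \<sigma>_Units[OF assms(1)] by auto
  have "c \<otimes>\<^bsub>Q\<^esub> \<pi> s = \<zero>\<^bsub>Q\<^esub> \<longleftrightarrow> \<tau> c \<otimes>\<^bsub>A\<^esub> \<tau> (\<pi> s) = \<zero>\<^bsub>A\<^esub>"
    using \<tau>_eq_zero_iff[of "c \<otimes>\<^bsub>Q\<^esub> \<pi> s"] c s(1) by simp
  then show "c \<otimes>\<^bsub>Q\<^esub> \<pi> s = \<zero>\<^bsub>Q\<^esub> \<longleftrightarrow> c = \<zero>\<^bsub>Q\<^esub>"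
    using A.mult_Units_eq_zero_iff[OF s(2)] \<tau>_eq_zero_iff[OF c] c by simp
  have "\<pi> s \<otimes>\<^bsub>Q\<^esub> c = \<zero>\<^bsub>Q\<^esub> \<longleftrightarrow> \<tau> (\<pi> s) \<otimes>\<^bsub>A\<^esub> \<tau> c = \<zero>\<^bsub>A\<^esub>"
    using \<tau>_eq_zero_iff[of "\<pi> s \<otimes>\<^bsub>Q\<^esub> c"] c s(1) by simp
  then show "\<pi> s \<otimes>\<^bsub>Q\<^esub> c = \<zero>\<^bsub>Q\<^esub> \<longleftrightarrow> c = \<zero>\<^bsub>Q\<^esub>"
    using A.Units_mult_eq_zero_iff[OF s(2)] \<tau>_eq_zero_iff[OF c] c by simp
qed

lemma \<pi>_S_Den_l: "\<pi> ` S \<in> Den_l Q"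
  unfolding Den_l_iff
proof (intro conjI ballI impI)
  show "\<pi> ` S \<subseteq> carrier Q" using S_closed \<pi>.hom_closed by blast
  show "\<one>\<^bsub>Q\<^esub> \<in> \<pi> ` S" using one_in_S \<pi>.hom_one by (metis image_eqI)
  show "\<zero>\<^bsub>Q\<^esub> \<notin> \<pi> ` S"
  proof
    assume "\<zero>\<^bsub>Q\<^esub> \<in> \<pi> ` S"
    then obtain s where s: "s \<in> S" "\<pi> s = \<zero>\<^bsub>Q\<^esub>" by blast
    then have "\<one>\<^bsub>Q\<^esub> = \<zero>\<^bsub>Q\<^esub>" using \<pi>_S_regular(1)[OF s(1) Q.one_closed] by simp
    then have "\<one>\<^bsub>A\<^esub> = \<zero>\<^bsub>A\<^esub>" using \<tau>.hom_one \<tau>.hom_zero by metis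
    then show False using one_ne_zero_A by contradiction
  qed
next
  fix c d assume "c \<in> \<pi> ` S" "d \<in> \<pi> ` S"
  then obtain s t where "s \<in> S" "t \<in> S" "c = \<pi> s" "d = \<pi> t" by blast
  then have "c \<otimes>\<^bsub>Q\<^esub> d = \<pi> (s \<otimes>\<^bsub>R\<^esub> t)" using S_closed by simp
  then show "c \<otimes>\<^bsub>Q\<^esub> d \<in> \<pi> ` S" using S_mult \<open>s \<in> S\<close> \<open>t \<in> S\<close> by blast
next
  fix c d assume c: "c \<in> carrier Q" and d: "d \<in> \<pi> ` S"
  obtain r s where rs: "r \<in> carrier R" "c = \<pi> r" "s \<in> S" "d = \<pi> s"
    using \<pi>_surj[OF c] d by blast
  obtain s' r' where sr: "s' \<in> S" "r' \<in> carrier R" "s' \<otimes>\<^bsub>R\<^esub> r = r' \<otimes>\<^bsub>R\<^esub> s"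
    using S_Ore[OF rs(1,3)] by blast
  then have "\<pi> s' \<otimes>\<^bsub>Q\<^esub> c = \<pi> r' \<otimes>\<^bsub>Q\<^esub> d"
    using rs S_closed by (simp flip: \<pi>.hom_mult)
  then show "\<exists>s'\<in>\<pi> ` S. \<exists>r'\<in>carrier Q. s' \<otimes>\<^bsub>Q\<^esub> c = r' \<otimes>\<^bsub>Q\<^esub> d"
    using sr(1,2) \<pi>.hom_closed by blast
next
  fix c d assume "c \<in> carrier Q" "d \<in> \<pi> ` S" "c \<otimes>\<^bsub>Q\<^esub> d = \<zero>\<^bsub>Q\<^esub>"
  then have "\<pi> \<one>\<^bsub>R\<^esub> \<otimes>\<^bsub>Q\<^esub> c = \<zero>\<^bsub>Q\<^esub>" using \<pi>_S_regular(1) by auto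
  then show "\<exists>t\<in>\<pi> ` S. t \<otimes>\<^bsub>Q\<^esub> c = \<zero>\<^bsub>Q\<^esub>" using one_in_S by blast
qed

lemma ass_\<pi>_S: "ass Q (\<pi> ` S) = {\<zero>\<^bsub>Q\<^esub>}"
proof
  show "ass Q (\<pi> ` S) \<subseteq> {\<zero>\<^bsub>Q\<^esub>}"
    using \<pi>_S_regular(2) unfolding ass_def[of Q] by blast
  have "\<pi> \<one>\<^bsub>R\<^esub> \<otimes>\<^bsub>Q\<^esub> \<zero>\<^bsub>Q\<^esub> = \<zero>\<^bsub>Q\<^esub>" by simp
  then show "{\<zero>\<^bsub>Q\<^esub>} \<subseteq> ass Q (\<pi> ` S)"
    using one_in_S Q.zero_closed unfolding ass_def[of Q] by blast
qed

lemma is_left_loc_quotient: "is_left_loc Q (\<pi> ` S) A \<tau>"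
  unfolding is_left_loc_def
proof (intro conjI ballI)
  show "\<tau> \<in> ring_hom Q A" by (rule \<tau>.homh)
next
  fix c assume "c \<in> \<pi> ` S"
  then show "\<tau> c \<in> Units A" using \<tau>_\<pi> S_closed \<sigma>_Units by auto
next
  fix a assume "a \<in> carrier A"
  then obtain s r where "s \<in> S" "r \<in> carrier R" "a = inv\<^bsub>A\<^esub> (\<sigma> s) \<otimes>\<^bsub>A\<^esub> \<sigma> r"
    by (rule left_fraction)
  then have "a = inv\<^bsub>A\<^esub> (\<tau> (\<pi> s)) \<otimes>\<^bsub>A\<^esub> \<tau> (\<pi> r)" using \<tau>_\<pi> S_closed by simp
  then show "\<exists>s\<in>\<pi> ` S. \<exists>r\<in>carrier Q. a = inv\<^bsub>A\<^esub> (\<tau> s) \<otimes>\<^bsub>A\<^esub> \<tau> r"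
    using \<open>s \<in> S\<close> \<open>r \<in> carrier R\<close> \<pi>.hom_closed by blast
next
  fix c assume "c \<in> carrier Q"
  then show "\<tau> c = \<zero>\<^bsub>A\<^esub> \<longleftrightarrow> c \<in> ass Q (\<pi> ` S)" using \<tau>_eq_zero_iff ass_\<pi>_S by simp
qed (rule A.ring_axioms)

end


locale max_left_localization = left_localization +
  assumes S_max: "S \<in> maxDen_l R"
begin

lemma preimage_eq_S:
  assumes "W \<in> Den_l A" and "Units A \<subseteq> W"
  shows "{r \<in> carrier R. \<sigma> r \<in> W} = S"
proof -
  have "S \<subseteq> {r \<in> carrier R. \<sigma> r \<in> W}" using assms(2) S_closed \<sigma>_Units by blast
  then show ?thesis using S_max preimage_Den_l[OF assms] unfolding maxDen_l_def by blast
qed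

lemma preimage_Units: "{r \<in> carrier R. \<sigma> r \<in> Units A} = S"
  by (rule preimage_eq_S[OF A.Units_Den_l[OF one_ne_zero_A] subset_refl])

lemma Den_l_superset_Units_eq:
  assumes W: "W \<in> Den_l A" and Units_W: "Units A \<subseteq> W"
  shows "W = Units A"
proof
  show "W \<subseteq> Units A"
  proof
    fix w assume w: "w \<in> W"
    have Wc: "W \<subseteq> carrier A" and W_mult: "\<forall>v\<in>W. \<forall>w\<in>W. v \<otimes>\<^bsub>A\<^esub> w \<in> W"
      using W unfolding Den_l_iff by auto
    obtain p v where pv: "p \<in> S" "v \<in> carrier R" "\<sigma> v = \<sigma> p \<otimes>\<^bsub>A\<^esub> w"
      using clear_denominator w Wc by blast
    have "\<sigma> v \<in> W" using pv(3) W_mult w \<sigma>_Units[OF pv(1)] Units_W by auto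
    then have "v \<in> S" using preimage_eq_S[OF W Units_W] pv(2) by blast
    then have "\<sigma> p \<otimes>\<^bsub>A\<^esub> w \<in> Units A" using \<sigma>_Units pv(3) by metis
    then show "w \<in> Units A"
      using A.Units_of_Units_mult[OF \<sigma>_Units[OF pv(1)]] w Wc by blast
  qed
qed (rule Units_W)

lemma Den_l_subset_Units:
  assumes T: "T \<in> Den_l A"
  shows "T \<subseteq> Units A"
proof -
  have Tc: "T \<subseteq> carrier A" and T: "\<one>\<^bsub>A\<^esub> \<in> T" "\<zero>\<^bsub>A\<^esub> \<notin> T"
      "\<forall>s\<in>T. \<forall>t\<in>T. s \<otimes>\<^bsub>A\<^esub> t \<in> T"
    and T_Ore: "\<forall>a\<in>carrier A. \<forall>t\<in>T. \<exists>t'\<in>T. \<exists>c\<in>carrier A. t' \<otimes>\<^bsub>A\<^esub> a = c \<otimes>\<^bsub>A\<^esub> t"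
    and T_rev: "\<forall>y\<in>carrier A. \<forall>t\<in>T. y \<otimes>\<^bsub>A\<^esub> t = \<zero>\<^bsub>A\<^esub> \<longrightarrow> (\<exists>t'\<in>T. t' \<otimes>\<^bsub>A\<^esub> y = \<zero>\<^bsub>A\<^esub>)"
    using T unfolding Den_l_iff by auto
  have T_W: "T \<subseteq> units_submonoid A T" by (rule A.subset_units_submonoid[OF Tc])
  have "units_submonoid A T \<in> Den_l A"
  proof (rule A.units_submonoid_Den_l[OF Tc T_W T])
    show "\<forall>g\<in>T. \<forall>a\<in>carrier A. \<exists>q\<in>units_submonoid A T. \<exists>c\<in>carrier A. q \<otimes>\<^bsub>A\<^esub> a = c \<otimes>\<^bsub>A\<^esub> g"
      using T_Ore T_W by blast
    show "\<forall>g\<in>T. \<forall>y\<in>carrier A. y \<otimes>\<^bsub>A\<^esub> g = \<zero>\<^bsub>A\<^esub> \<longrightarrow> (\<exists>k\<in>T. k \<otimes>\<^bsub>A\<^esub> y = \<zero>\<^bsub>A\<^esub>)"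
      using T_rev by blast
  qed
  then have "units_submonoid A T = Units A"
    using Den_l_superset_Units_eq A.Units_subset_units_submonoid by blast
  then show ?thesis using T_W by simp
qed

context
  fixes T :: "'a set"
  assumes T: "T \<subseteq> carrier R"
    and T_Ore: "\<forall>v\<in>carrier R. \<forall>x\<in>T. \<exists>y\<in>T. \<exists>z\<in>carrier R. \<sigma> (y \<otimes>\<^bsub>R\<^esub> v) = \<sigma> (z \<otimes>\<^bsub>R\<^esub> x)"
    and T_reg: "\<forall>v\<in>carrier R. \<forall>x\<in>T. \<sigma> (v \<otimes>\<^bsub>R\<^esub> x) = \<zero>\<^bsub>A\<^esub> \<longrightarrow> \<sigma> v = \<zero>\<^bsub>A\<^esub>"
begin

text \<open>The hypotheses on \<open>T\<close> are the Ore and regularity conditions for \<open>\<sigma> ` T\<close> in \<open>A\<close>,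
  pulled back to \<open>R\<close> by clearing denominators.\<close>

lemma image_Ore:
  assumes a: "a \<in> carrier A" and x: "x \<in> T"
  shows "\<exists>q\<in>units_submonoid A (\<sigma> ` T). \<exists>c\<in>carrier A. q \<otimes>\<^bsub>A\<^esub> a = c \<otimes>\<^bsub>A\<^esub> \<sigma> x"
proof -
  obtain p v where pv: "p \<in> S" "v \<in> carrier R" "\<sigma> v = \<sigma> p \<otimes>\<^bsub>A\<^esub> a"
    using clear_denominator[OF a] .
  obtain y z where yz: "y \<in> T" "z \<in> carrier R" "\<sigma> (y \<otimes>\<^bsub>R\<^esub> v) = \<sigma> (z \<otimes>\<^bsub>R\<^esub> x)"
    using T_Ore pv(2) x by blast
  have p: "p \<in> carrier R" and y: "y \<in> carrier R" using S_closed pv(1) T yz(1) by auto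
  have "\<sigma> y \<otimes>\<^bsub>A\<^esub> (\<sigma> p \<otimes>\<^bsub>A\<^esub> \<one>\<^bsub>A\<^esub>) \<in> units_submonoid A (\<sigma> ` T)"
    using yz(1)
    by (intro units_submonoid.gen units_submonoid.unit units_submonoid.one \<sigma>_Units pv(1)) auto
  moreover have "(\<sigma> y \<otimes>\<^bsub>A\<^esub> (\<sigma> p \<otimes>\<^bsub>A\<^esub> \<one>\<^bsub>A\<^esub>)) \<otimes>\<^bsub>A\<^esub> a = \<sigma> (y \<otimes>\<^bsub>R\<^esub> v)"
    using pv p y a by (simp add: A.m_assoc)
  ultimately show ?thesis using yz x T by (metis \<sigma>.hom_closed \<sigma>.hom_mult subsetD)
qed

lemma image_regular:
  assumes y: "y \<in> carrier A" and x: "x \<in> T" and yx: "y \<otimes>\<^bsub>A\<^esub> \<sigma> x = \<zero>\<^bsub>A\<^esub>"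
  shows "y = \<zero>\<^bsub>A\<^esub>"
proof -
  obtain p v where pv: "p \<in> S" "v \<in> carrier R" "\<sigma> v = \<sigma> p \<otimes>\<^bsub>A\<^esub> y"
    using clear_denominator[OF y] .
  have p: "p \<in> carrier R" and "x \<in> carrier R" using S_closed pv(1) T x by auto
  then have "\<sigma> (v \<otimes>\<^bsub>R\<^esub> x) = \<sigma> p \<otimes>\<^bsub>A\<^esub> (y \<otimes>\<^bsub>A\<^esub> \<sigma> x)"
    using pv y by (simp add: A.m_assoc)
  also have "\<dots> = \<zero>\<^bsub>A\<^esub>" using yx p by simp
  finally have "\<sigma> v = \<zero>\<^bsub>A\<^esub>" using T_reg pv(2) x by blast
  then have "\<sigma> p \<otimes>\<^bsub>A\<^esub> y = \<zero>\<^bsub>A\<^esub>" using pv(3) by simp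
  then show ?thesis using A.Units_mult_eq_zero_iff[OF \<sigma>_Units[OF pv(1)] y] by simp
qed

lemma image_subset_Units: "\<sigma> ` T \<subseteq> Units A"
proof -
  have G: "\<sigma> ` T \<subseteq> carrier A" using T by auto
  have "units_submonoid A (\<sigma> ` T) \<in> Den_l A"
    using one_ne_zero_A image_Ore image_regular
    by (intro A.units_submonoid_Den_l[OF G, of "{\<one>\<^bsub>A\<^esub>}"]) (auto simp: units_submonoid.one)
  then have "units_submonoid A (\<sigma> ` T) = Units A"
    using Den_l_superset_Units_eq A.Units_subset_units_submonoid by blast
  then show ?thesis using A.subset_units_submonoid[OF G] by simp
qed

end

lemma Den_l_ass_subset_S:
  assumes T: "T \<in> Den_l R" and ass_T: "ass R T = \<aa>"
  shows "T \<subseteq> S"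
proof -
  have Tc: "T \<subseteq> carrier R" and T_mult: "\<forall>s\<in>T. \<forall>t\<in>T. s \<otimes>\<^bsub>R\<^esub> t \<in> T"
    and T_Ore: "\<forall>r\<in>carrier R. \<forall>t\<in>T. \<exists>t'\<in>T. \<exists>r'\<in>carrier R. t' \<otimes>\<^bsub>R\<^esub> r = r' \<otimes>\<^bsub>R\<^esub> t"
    and T_rev: "\<forall>r\<in>carrier R. \<forall>t\<in>T. r \<otimes>\<^bsub>R\<^esub> t = \<zero>\<^bsub>R\<^esub> \<longrightarrow> (\<exists>t'\<in>T. t' \<otimes>\<^bsub>R\<^esub> r = \<zero>\<^bsub>R\<^esub>)"
    using T unfolding Den_l_iff by auto
  have "\<sigma> v = \<zero>\<^bsub>A\<^esub>"
    if v: "v \<in> carrier R" and t: "t \<in> T" and vt: "\<sigma> (v \<otimes>\<^bsub>R\<^esub> t) = \<zero>\<^bsub>A\<^esub>" for v t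
  proof -
    have tc: "t \<in> carrier R" using Tc t by blast
    have "v \<otimes>\<^bsub>R\<^esub> t \<in> \<aa>" using \<sigma>_eq_zero_iff[OF R.m_closed[OF v tc]] vt by blast
    then have "v \<otimes>\<^bsub>R\<^esub> t \<in> ass R T" using ass_T by simp
    then obtain t' where t': "t' \<in> T" "t' \<otimes>\<^bsub>R\<^esub> (v \<otimes>\<^bsub>R\<^esub> t) = \<zero>\<^bsub>R\<^esub>"
      unfolding ass_def by blast
    have t'c: "t' \<in> carrier R" using Tc t'(1) by blast
    then have "(t' \<otimes>\<^bsub>R\<^esub> v) \<otimes>\<^bsub>R\<^esub> t = \<zero>\<^bsub>R\<^esub>" using t'(2) v tc by (simp add: R.m_assoc)
    then obtain t'' where t'': "t'' \<in> T" "t'' \<otimes>\<^bsub>R\<^esub> (t' \<otimes>\<^bsub>R\<^esub> v) = \<zero>\<^bsub>R\<^esub>"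
      using T_rev t'c v t by blast
    then have "(t'' \<otimes>\<^bsub>R\<^esub> t') \<otimes>\<^bsub>R\<^esub> v = \<zero>\<^bsub>R\<^esub>" using Tc t'c v by (simp add: R.m_assoc subsetD)
    then have "v \<in> ass R T" using T_mult t''(1) t'(1) v unfolding ass_def by blast
    then show ?thesis using \<sigma>_eq_zero_iff v ass_T by simp
  qed
  then have "\<sigma> ` T \<subseteq> Units A"
    using image_subset_Units[OF Tc] T_Ore by (metis \<sigma>.hom_mult)
  then show ?thesis using preimage_Units Tc by blast
qed

lemma S_ass_eq_S: "S_ass R \<aa> = S"
proof (rule S_ass_eqI)
  show "S \<in> Den_l_ass R \<aa>" using S_Den_l by (simp add: Den_l_ass_def)
qed (use Den_l_ass_subset_S in \<open>auto simp: Den_l_ass_def\<close>)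

lemma \<pi>_mem_\<pi>_S_iff:
  assumes r: "r \<in> carrier R"
  shows "\<pi> r \<in> \<pi> ` S \<longleftrightarrow> r \<in> S"
proof
  assume "\<pi> r \<in> \<pi> ` S"
  then obtain s where "s \<in> S" "\<pi> r = \<pi> s" by blast
  then have "\<sigma> r \<in> Units A" using \<pi>_eq_imp_\<sigma>_eq[OF r S_closed] \<sigma>_Units by metis
  then show "r \<in> S" using preimage_Units r by blast
qed blast

context
  fixes T :: "'a set set"
  assumes T: "T \<in> Den_l Q" and ass_T: "ass Q T = {\<zero>\<^bsub>Q\<^esub>}"
begin

lemma quotient_preimage_Ore:
  assumes v: "v \<in> carrier R" and x: "x \<in> carrier R" "\<pi> x \<in> T"
  shows "\<exists>y\<in>{x \<in> carrier R. \<pi> x \<in> T}. \<exists>z\<in>carrier R. \<sigma> (y \<otimes>\<^bsub>R\<^esub> v) = \<sigma> (z \<otimes>\<^bsub>R\<^esub> x)"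
proof -
  have Tc: "T \<subseteq> carrier Q"
    and T_Ore: "\<forall>c\<in>carrier Q. \<forall>t\<in>T. \<exists>t'\<in>T. \<exists>d\<in>carrier Q. t' \<otimes>\<^bsub>Q\<^esub> c = d \<otimes>\<^bsub>Q\<^esub> t"
    using T unfolding Den_l_iff by auto
  obtain t d where td: "t \<in> T" "d \<in> carrier Q" "t \<otimes>\<^bsub>Q\<^esub> \<pi> v = d \<otimes>\<^bsub>Q\<^esub> \<pi> x"
    using T_Ore \<pi>.hom_closed[OF v] x(2) by blast
  moreover obtain y z where "y \<in> carrier R" "t = \<pi> y" "z \<in> carrier R" "d = \<pi> z"
    using \<pi>_surj td(1,2) Tc by blast
  ultimately have "\<pi> y \<in> T" "\<pi> (y \<otimes>\<^bsub>R\<^esub> v) = \<pi> (z \<otimes>\<^bsub>R\<^esub> x)"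
    using v x by auto
  then show ?thesis
    using \<pi>_eq_imp_\<sigma>_eq \<open>y \<in> carrier R\<close> \<open>z \<in> carrier R\<close> v x by blast
qed

lemma quotient_preimage_regular:
  assumes v: "v \<in> carrier R" and x: "x \<in> carrier R" "\<pi> x \<in> T"
    and vx: "\<sigma> (v \<otimes>\<^bsub>R\<^esub> x) = \<zero>\<^bsub>A\<^esub>"
  shows "\<sigma> v = \<zero>\<^bsub>A\<^esub>"
proof -
  have vx_c: "v \<otimes>\<^bsub>R\<^esub> x \<in> carrier R" using v x(1) by blast
  have "\<tau> (\<pi> (v \<otimes>\<^bsub>R\<^esub> x)) = \<zero>\<^bsub>A\<^esub>" using \<tau>_\<pi>[OF vx_c] vx by (rule trans)
  then have "\<pi> (v \<otimes>\<^bsub>R\<^esub> x) = \<zero>\<^bsub>Q\<^esub>" using \<tau>_eq_zero_iff[OF \<pi>.hom_closed[OF vx_c]] by blast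
  then have "\<pi> v \<otimes>\<^bsub>Q\<^esub> \<pi> x = \<zero>\<^bsub>Q\<^esub>" using v x by simp
  moreover have "\<forall>c\<in>carrier Q. \<forall>t\<in>T. c \<otimes>\<^bsub>Q\<^esub> t = \<zero>\<^bsub>Q\<^esub> \<longrightarrow> (\<exists>t'\<in>T. t' \<otimes>\<^bsub>Q\<^esub> c = \<zero>\<^bsub>Q\<^esub>)"
    using T unfolding Den_l_iff by auto
  ultimately obtain t where "t \<in> T" "t \<otimes>\<^bsub>Q\<^esub> \<pi> v = \<zero>\<^bsub>Q\<^esub>"
    using \<pi>.hom_closed[OF v] x(2) by blast
  then have "\<pi> v \<in> ass Q T" using \<pi>.hom_closed[OF v] unfolding ass_def[of Q] by blast
  then show ?thesis using ass_T \<tau>_\<pi>[OF v] by simp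
qed

lemma Den_l_ass_quotient_subset: "T \<subseteq> \<pi> ` S"
proof -
  have "\<sigma> ` {x \<in> carrier R. \<pi> x \<in> T} \<subseteq> Units A"
  proof (rule image_subset_Units)
    show "\<forall>v\<in>carrier R. \<forall>x\<in>{x \<in> carrier R. \<pi> x \<in> T}.
        \<exists>y\<in>{x \<in> carrier R. \<pi> x \<in> T}. \<exists>z\<in>carrier R. \<sigma> (y \<otimes>\<^bsub>R\<^esub> v) = \<sigma> (z \<otimes>\<^bsub>R\<^esub> x)"
      using quotient_preimage_Ore by blast
    show "\<forall>v\<in>carrier R. \<forall>x\<in>{x \<in> carrier R. \<pi> x \<in> T}.
        \<sigma> (v \<otimes>\<^bsub>R\<^esub> x) = \<zero>\<^bsub>A\<^esub> \<longrightarrow> \<sigma> v = \<zero>\<^bsub>A\<^esub>"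
      using quotient_preimage_regular by blast
  qed blast
  then have "{x \<in> carrier R. \<pi> x \<in> T} \<subseteq> S" using preimage_Units by blast
  moreover have "T \<subseteq> carrier Q" using T unfolding Den_l_iff by auto
  ultimately show ?thesis using \<pi>_surj by blast
qed

end

lemma S0_quotient: "S0 Q = \<pi> ` S"
  unfolding S0_def
proof (rule S_ass_eqI)
  show "\<pi> ` S \<in> Den_l_ass Q {\<zero>\<^bsub>Q\<^esub>}" using \<pi>_S_Den_l ass_\<pi>_S by (simp add: Den_l_ass_def)
qed (use Den_l_ass_quotient_subset in \<open>auto simp: Den_l_ass_def\<close>)

lemma S0_eq_Units: "S0 A = Units A"
  unfolding S0_def
proof (rule S_ass_eqI)
  show "Units A \<in> Den_l_ass A {\<zero>\<^bsub>A\<^esub>}"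
    using A.Units_Den_l A.ass_eq_zero_if_subset_Units one_ne_zero_A
    by (simp add: Den_l_ass_def)
qed (use Den_l_subset_Units in \<open>auto simp: Den_l_ass_def\<close>)

lemma Ass_l_eq: "Ass_l A = {{\<zero>\<^bsub>A\<^esub>}}"
proof -
  have "ass A T = {\<zero>\<^bsub>A\<^esub>}" if "T \<in> Den_l A" for T
    using A.ass_eq_zero_if_subset_Units Den_l_subset_Units that unfolding Den_l_iff by blast
  then show ?thesis
    unfolding Ass_l_def using A.Units_Den_l[OF one_ne_zero_A] by blast
qed

lemma Units_eq_fractions: "Units A = {inv\<^bsub>A\<^esub> (\<sigma> s) \<otimes>\<^bsub>A\<^esub> \<sigma> t |s t. s \<in> S \<and> t \<in> S}"
proof
  show "Units A \<subseteq> {inv\<^bsub>A\<^esub> (\<sigma> s) \<otimes>\<^bsub>A\<^esub> \<sigma> t |s t. s \<in> S \<and> t \<in> S}"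
  proof
    fix u assume u: "u \<in> Units A"
    obtain s r where sr: "s \<in> S" "r \<in> carrier R" "u = inv\<^bsub>A\<^esub> (\<sigma> s) \<otimes>\<^bsub>A\<^esub> \<sigma> r"
      using left_fraction u by blast
    then have "\<sigma> s \<otimes>\<^bsub>A\<^esub> u = \<sigma> r"
      using \<sigma>_Units[OF sr(1)] by (simp add: A.m_assoc[symmetric] A.Units_closed)
    then have "r \<in> S" using \<sigma>_Units[OF sr(1)] u preimage_Units sr(2) by (metis A.Units_m_closed mem_Collect_eq)
    then show "u \<in> {inv\<^bsub>A\<^esub> (\<sigma> s) \<otimes>\<^bsub>A\<^esub> \<sigma> t |s t. s \<in> S \<and> t \<in> S}" using sr by blast
  qed
qed (use \<sigma>_Units in auto)

lemma Units_eq_generate: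
  "Units A = generate (units_of A) (\<sigma> ` S \<union> (\<lambda>s. inv\<^bsub>A\<^esub> (\<sigma> s)) ` S)"
    (is "_ = generate _ ?H")
proof
  have "?H \<subseteq> carrier (units_of A)" using \<sigma>_Units by (auto simp: units_of_carrier)
  then show "generate (units_of A) ?H \<subseteq> Units A"
    using group.generate_incl[OF A.units_group] by (simp add: units_of_carrier)
next
  show "Units A \<subseteq> generate (units_of A) ?H"
  proof
    fix u assume "u \<in> Units A"
    then obtain s t where st: "s \<in> S" "t \<in> S" "u = inv\<^bsub>A\<^esub> (\<sigma> s) \<otimes>\<^bsub>A\<^esub> \<sigma> t"
      using Units_eq_fractions by blast
    have "inv\<^bsub>A\<^esub> (\<sigma> s) \<otimes>\<^bsub>units_of A\<^esub> \<sigma> t \<in> generate (units_of A) ?H"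
      using st by (intro generate.eng generate.incl) auto
    then show "u \<in> generate (units_of A) ?H" using st by (simp add: units_of_mult)
  qed
qed

lemma S_eq_preimage_S0_quotient: "S = {r \<in> carrier R. \<pi> r \<in> S0 Q}"
proof -
  have "r \<in> S \<longleftrightarrow> r \<in> carrier R \<and> \<pi> r \<in> \<pi> ` S" for r
    using \<pi>_mem_\<pi>_S_iff S_closed by blast
  then show ?thesis unfolding S0_quotient by blast
qed

lemma S0_inter_image:
  "S0 A \<inter> \<sigma> ` carrier R = {\<sigma> r |r. r \<in> carrier R \<and> \<pi> r \<in> S0 Q}"
proof -
  have "r \<in> carrier R \<and> \<sigma> r \<in> Units A \<longleftrightarrow> r \<in> carrier R \<and> \<pi> r \<in> S0 Q" for r
    using preimage_Units S_eq_preimage_S0_quotient by blast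
  then show ?thesis unfolding S0_eq_Units by blast
qed

lemma ex_quotient_left_loc:
  "\<exists>\<tau>'. (\<forall>r\<in>carrier R. \<tau>' (\<pi> r) = \<sigma> r) \<and> is_left_loc Q (S0 Q) A \<tau>'"
  unfolding S0_quotient using \<tau>_\<pi> is_left_loc_quotient by (intro exI[of _ \<tau>]) simp

end

theorem theorem3p9:
  fixes R :: "('a,'m) ring_scheme" and A :: "('b,'n) ring_scheme"
    and S :: "'a set" and \<sigma> :: "'a \<Rightarrow> 'b"
  assumes "ring R"
    and "S \<in> maxDen_l R"
    and "is_left_loc R S A \<sigma>"
  defines "\<aa> \<equiv> ass R S"
  defines "\<pi> \<equiv> (\<lambda>r. \<aa> +>\<^bsub>R\<^esub> r)"
  shows
    \<comment> \<open>(1)\<close>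
    "S = S_ass R \<aa> \<and>
     S = {r \<in> carrier R. \<pi> r \<in> S0 (R Quot \<aa>)} \<and>
     \<pi> ` S = S0 (R Quot \<aa>) \<and>
     (\<exists>\<tau>. (\<forall>r\<in>carrier R. \<tau> (\<pi> r) = \<sigma> r) \<and>
          is_left_loc (R Quot \<aa>) (S0 (R Quot \<aa>)) A \<tau>) \<and>
     \<comment> \<open>(2)\<close>
     S0 A = Units A \<and>
     S0 A \<inter> \<sigma> ` carrier R = {\<sigma> r |r. r \<in> carrier R \<and> \<pi> r \<in> S0 (R Quot \<aa>)} \<and>
     \<comment> \<open>(3)\<close>
     S = {r \<in> carrier R. \<sigma> r \<in> Units A} \<and>
     \<comment> \<open>(4)\<close>
     Units A = generate (units_of A) (\<sigma> ` S \<union> (\<lambda>s. inv\<^bsub>A\<^esub> (\<sigma> s)) ` S) \<and>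
     \<comment> \<open>(5)\<close>
     Units A = {inv\<^bsub>A\<^esub> (\<sigma> s) \<otimes>\<^bsub>A\<^esub> \<sigma> t |s t. s \<in> S \<and> t \<in> S} \<and>
     \<comment> \<open>(6)\<close>
     is_left_loc A (S0 A) A (\<lambda>x. x) \<and>
     Ass_l A = {{\<zero>\<^bsub>A\<^esub>}} \<and>
     (\<forall>T\<in>Den_l_ass A {\<zero>\<^bsub>A\<^esub>}. T \<subseteq> Units A)"
proof -
  have "ring A" "S \<in> Den_l R" using assms(2,3) by (auto simp: is_left_loc_def maxDen_l_def)
  then interpret max_left_localization R A S \<sigma>
    using assms(1-3) by (intro max_left_localization.intro left_localization.intro
      max_left_localization_axioms.intro left_localization_axioms.intro)
  have "is_left_loc A (S0 A) A (\<lambda>x. x)"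
    unfolding S0_eq_Units by (rule A.is_left_loc_Units[OF one_ne_zero_A])
  moreover have "\<forall>T\<in>Den_l_ass A {\<zero>\<^bsub>A\<^esub>}. T \<subseteq> Units A"
    using Den_l_subset_Units by (simp add: Den_l_ass_def)
  ultimately show ?thesis
    unfolding \<aa>_def \<pi>_def
    using S_ass_eq_S[symmetric] S_eq_preimage_S0_quotient S0_quotient[symmetric]
      ex_quotient_left_loc S0_eq_Units S0_inter_image preimage_Units[symmetric]
      Units_eq_generate Units_eq_fractions Ass_l_eq
    by - (intro conjI; assumption)
qed

end
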